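(* Let $0\le m\le r\le n$. Every $L\in\mathcal L_{r,m}$ can be written uniquely as $L=\sum_{j=0}^r p_j(x)K_{rj}$ with $p_j\in\mathcal P_{r-m}$, and conversely every such sum lies in $\mathcal L_{r,m}$; i.e. $\mathcal L_{r,m}=\mathcal P_{r-m}\otimes\mathcal L_{r,r}$. Hence $\dim\mathcal L_{r,m}=(r+1)(r-m+1)$; in particular the space of operators of order at most $r$ mapping $\mathcal P_n$ into itself has dimension $(r+1)^2$.
   Context: $D=d/dx$. For $s\ge0$, $\mathcal P_s$ is the space of real polynomials in $x$ of degree at most $s$, and $\mathcal P_s=\{0\}$ for $s<0$. For $0\le m\le r$, $\mathcal L_{r,m}$ denotes the real vector space of linear differential operators $L=\sum_{i=0}^r a_i(x)D^i$ with $a_i\in\mathbb R[x]$ (order at most $r$) such that $L(\mathcal P_n)\subset\mathcal P_{n-m}$ (deficiency at least $m$ relative to $\mathcal P_n$). Pochhammer operator: $(a-xD)_k=(-1)^k(xD-a)(xD-(a-1))\cdots(xD-(a-k+1))$. $K_{rj}=\frac{1}{(r-j)!}(n-j-xD)_{r-j}D^j$. *)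

theory Defs
  imports "HOL-Computational_Algebra.Polynomial" "HOL-Library.Function_Algebras"
begin

text \<open>Linear differential operators on real polynomials are represented
semantically, as maps real poly => real poly.  D is pderiv.\<close>

type_synonym diffop = "real poly \<Rightarrow> real poly"

definition Pspace :: "nat \<Rightarrow> real poly set" where
  "Pspace s = {p. degree p \<le> s}"

definition diffop_of :: "nat \<Rightarrow> (nat \<Rightarrow> real poly) \<Rightarrow> diffop" where
  "diffop_of r a = (\<lambda>q. \<Sum>i\<le>r. a i * (pderiv ^^ i) q)"

definition Lspace :: "nat \<Rightarrow> nat \<Rightarrow> nat \<Rightarrow> diffop set" where
  "Lspace n r m = {L. (\<exists>a. L = diffop_of r a) \<and> (\<forall>q \<in> Pspace n. L q \<in> Pspace (n - m))}"

definition xD :: diffop where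
  "xD q = [:0, 1:] * pderiv q"

text \<open>Pochhammer operator (a - xD)_k = prod_{i<k} (a - i - xD)
  (equal to (-1)^k (xD - a)(xD - (a-1))...(xD - (a-k+1)); the factors commute).\<close>
fun poch_op :: "real \<Rightarrow> nat \<Rightarrow> diffop" where
  "poch_op a 0 = (\<lambda>q. q)"
| "poch_op a (Suc k) = (\<lambda>q. smult (a - real k) (poch_op a k q) - xD (poch_op a k q))"

definition Kop :: "nat \<Rightarrow> nat \<Rightarrow> nat \<Rightarrow> diffop" where
  "Kop n r j = (\<lambda>q. smult (1 / fact (r - j)) (poch_op (real n - real j) (r - j) ((pderiv ^^ j) q)))"

definition Ksum :: "nat \<Rightarrow> nat \<Rightarrow> (nat \<Rightarrow> real poly) \<Rightarrow> diffop" where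
  "Ksum n r p = (\<lambda>q. \<Sum>j\<le>r. p j * Kop n r j q)"

definition op_scale :: "real \<Rightarrow> diffop \<Rightarrow> diffop" where
  "op_scale c L = (\<lambda>q. smult c (L q))"

end

theory Submission
  imports Defs
begin

text \<open>
  On monomials everything is explicit: \<open>K_rj x^k = c_jk x^(k-j)\<close>, where \<open>c_jk\<close> vanishes
  unless \<open>j \<le> k \<le> n - r + j\<close> and is nonzero in that range. An operator of order at
  most \<open>r\<close> is determined by its values on \<open>1, x, ..., x^r\<close>, and \<open>(c_jk)\<close> restricted to
  \<open>j, k \<le> r\<close> is triangular with nonzero diagonal, so every such operator is
  \<open>\<Sum>j. p_j K_rj\<close> with unique polynomial coefficients \<open>p_j\<close>.
  The upper vanishing of \<open>c_jk\<close> gives \<open>K_rj(P_n) \<subseteq> P_(n-r)\<close>, so \<open>deg p_j \<le> r - m\<close>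
  suffices for deficiency \<open>m\<close>. Conversely, applying the operator to \<open>x^(n-r+j)\<close> kills the
  terms of index below \<open>j\<close> and sends \<open>p_j K_rj\<close> to a nonzero multiple of \<open>p_j x^(n-r)\<close>,
  so descending induction on \<open>j\<close> bounds \<open>deg p_j\<close>. The operators \<open>x^i K_rj\<close> with
  \<open>i \<le> r - m\<close> and \<open>j \<le> r\<close> then form a basis of \<open>L_(r,m)\<close>.
\<close>

definition falling_fact :: "nat \<Rightarrow> nat \<Rightarrow> real" where
  "falling_fact j k = (\<Prod>i<j. real (k - i))"

lemma falling_fact_eq_0: "k < j \<Longrightarrow> falling_fact j k = 0"
  unfolding falling_fact_def by (auto intro!: bexI[where x=k])

lemma falling_fact_nonzero: "j \<le> k \<Longrightarrow> falling_fact j k \<noteq> 0"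
  unfolding falling_fact_def by auto

lemma higher_pderiv_monom_falling_fact:
  "(pderiv ^^ j) (monom c k) = monom (falling_fact j k * c) (k - j)"
  by (induction j arbitrary: c) (simp_all add: pderiv_monom falling_fact_def mult_ac)

lemma xD_monom: "xD (monom c d) = monom (real d * c) d"
  unfolding xD_def pderiv_monom by (cases d) (auto simp: monom_Suc)

lemma poch_op_monom:
  "poch_op a k (monom c d) = monom ((\<Prod>i<k. a - real i - real d) * c) d"
  by (induction k) (auto simp: xD_monom smult_monom algebra_simps diff_monom)

text \<open>For \<open>j \<le> k \<le> n\<close> this is \<open>(n - k choose r - j) * k! / (k - j)!\<close>.\<close>

definition Kcoeff :: "nat \<Rightarrow> nat \<Rightarrow> nat \<Rightarrow> nat \<Rightarrow> real" where
  "Kcoeff n r j k = (\<Prod>i<r - j. real n - real k - real i) / fact (r - j) * falling_fact j k"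

lemma Kop_monom: "Kop n r j (monom 1 k) = monom (Kcoeff n r j k) (k - j)"
proof (cases "j \<le> k")
  case True
  have "(\<Prod>i<r - j. real n - real j - real i - real (k - j)) = (\<Prod>i<r - j. real n - real k - real i)"
    using True by (intro prod.cong) auto
  then show ?thesis
    by (simp add: Kop_def Kcoeff_def higher_pderiv_monom_falling_fact poch_op_monom smult_monom)
next
  case False
  then show ?thesis using poch_op_monom[of "real n - real j" "r - j" 0 0]
    by (simp add: Kop_def Kcoeff_def higher_pderiv_monom_falling_fact falling_fact_eq_0)
qed

lemma Kcoeff_eq_0_below: "k < j \<Longrightarrow> Kcoeff n r j k = 0"
  unfolding Kcoeff_def by (simp add: falling_fact_eq_0)

lemma Kcoeff_eq_0_above:
  assumes "k \<le> n" "n - r + j < k"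
  shows "Kcoeff n r j k = 0"
proof -
  have "n - k \<in> {..<r - j}"
    using assms by auto
  moreover have "real n - real k - real (n - k) = 0"
    using assms(1) by simp
  ultimately have "(\<Prod>i<r - j. real n - real k - real i) = 0"
    by (meson finite_lessThan prod_zero)
  then show ?thesis
    by (simp add: Kcoeff_def)
qed

lemma Kcoeff_nonzero:
  assumes "j \<le> k" "k \<le> n - r + j" "r \<le> n"
  shows "Kcoeff n r j k \<noteq> 0"
proof -
  have "\<forall>i\<in>{..<r - j}. real n - real k - real i \<noteq> 0"
    using assms by auto
  then show ?thesis
    unfolding Kcoeff_def using falling_fact_nonzero[OF assms(1)] by simp
qed

definition is_diffop :: "nat \<Rightarrow> diffop \<Rightarrow> bool" where
  "is_diffop r L \<longleftrightarrow> (\<exists>a. L = diffop_of r a)"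

lemma is_diffop_mono:
  assumes "is_diffop r L" "r \<le> r'"
  shows "is_diffop r' L"
proof -
  obtain a where a: "L = diffop_of r a"
    using assms(1) unfolding is_diffop_def by blast
  have "diffop_of r' (\<lambda>i. if i \<le> r then a i else 0) q = L q" for q
  proof -
    have "diffop_of r' (\<lambda>i. if i \<le> r then a i else 0) q
        = (\<Sum>i\<le>r'. if i \<le> r then a i * (pderiv ^^ i) q else 0)"
      unfolding diffop_of_def by (intro sum.cong) auto
    also have "\<dots> = (\<Sum>i\<le>r. a i * (pderiv ^^ i) q)"
      using assms(2) by (simp add: sum.If_cases) (intro sum.cong, auto)
    finally show ?thesis
      by (simp add: a diffop_of_def)
  qed
  then have "L = diffop_of r' (\<lambda>i. if i \<le> r then a i else 0)"
    by (simp add: fun_eq_iff)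
  then show ?thesis
    unfolding is_diffop_def by blast
qed

lemma is_diffop_add:
  assumes "is_diffop r L" "is_diffop r M"
  shows "is_diffop r (\<lambda>q. L q + M q)"
proof -
  obtain a b where "L = diffop_of r a" "M = diffop_of r b"
    using assms unfolding is_diffop_def by blast
  then have "(\<lambda>q. L q + M q) = diffop_of r (\<lambda>i. a i + b i)"
    by (simp add: diffop_of_def sum.distrib algebra_simps)
  then show ?thesis
    unfolding is_diffop_def by blast
qed

lemma is_diffop_diff:
  assumes "is_diffop r L" "is_diffop r M"
  shows "is_diffop r (\<lambda>q. L q - M q)"
proof -
  obtain a b where "L = diffop_of r a" "M = diffop_of r b"
    using assms unfolding is_diffop_def by blast
  then have "(\<lambda>q. L q - M q) = diffop_of r (\<lambda>i. a i - b i)"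
    by (simp add: diffop_of_def sum_subtractf algebra_simps)
  then show ?thesis
    unfolding is_diffop_def by blast
qed

lemma is_diffop_mult_left:
  assumes "is_diffop r L"
  shows "is_diffop r (\<lambda>q. c * L q)"
proof -
  obtain a where "L = diffop_of r a"
    using assms unfolding is_diffop_def by blast
  then have "(\<lambda>q. c * L q) = diffop_of r (\<lambda>i. c * a i)"
    by (simp add: diffop_of_def sum_distrib_left mult.assoc)
  then show ?thesis
    unfolding is_diffop_def by blast
qed

lemma is_diffop_smult: "is_diffop r L \<Longrightarrow> is_diffop r (\<lambda>q. smult c (L q))"
  using is_diffop_mult_left[of r L "[:c:]"] by simp

lemma is_diffop_zero: "is_diffop r (\<lambda>q. 0)"
  unfolding is_diffop_def diffop_of_def by (intro exI[of _ "\<lambda>i. 0"]) simp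

lemma is_diffop_sum:
  "(\<And>x. x \<in> A \<Longrightarrow> is_diffop r (L x)) \<Longrightarrow> is_diffop r (\<lambda>q. \<Sum>x\<in>A. L x q)"
  by (induction A rule: infinite_finite_induct) (simp_all add: is_diffop_zero is_diffop_add)

lemma is_diffop_higher_pderiv:
  assumes "i \<le> r"
  shows "is_diffop r (\<lambda>q. c * (pderiv ^^ i) q)"
proof -
  have "diffop_of r (\<lambda>l. if l = i then c else 0) q = c * (pderiv ^^ i) q" for q
    using assms unfolding diffop_of_def by (simp add: if_distrib[of "\<lambda>x. x * _"] cong: if_cong)
  then have "(\<lambda>q. c * (pderiv ^^ i) q) = diffop_of r (\<lambda>l. if l = i then c else 0)"
    by (simp add: fun_eq_iff)
  then show ?thesis
    unfolding is_diffop_def by blast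
qed

lemma pderiv_sum: "pderiv (sum f A) = (\<Sum>x\<in>A. pderiv (f x))"
  using higher_pderiv_sum[of 1] by simp

lemma is_diffop_xD:
  assumes "is_diffop r L"
  shows "is_diffop (Suc r) (\<lambda>q. xD (L q))"
proof -
  obtain a where a: "L = diffop_of r a"
    using assms unfolding is_diffop_def by blast
  have eq: "(\<lambda>q. xD (L q)) = (\<lambda>q. \<Sum>i\<le>r. ([:0, 1:] * pderiv (a i)) * (pderiv ^^ i) q
                                   + ([:0, 1:] * a i) * (pderiv ^^ Suc i) q)"
    unfolding a diffop_of_def xD_def
    by (simp add: pderiv_sum sum_distrib_left pderiv_mult algebra_simps)
  show ?thesis
    unfolding eq by (intro is_diffop_sum is_diffop_add is_diffop_higher_pderiv) auto
qed

lemma is_diffop_poch_op: "is_diffop (k + j) (\<lambda>q. poch_op a k ((pderiv ^^ j) q))"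
proof (induction k)
  case 0
  then show ?case
    using is_diffop_higher_pderiv[of j j 1] by simp
next
  case (Suc k)
  then have "is_diffop (Suc k + j) (\<lambda>q. poch_op a k ((pderiv ^^ j) q))"
    by (rule is_diffop_mono) simp
  then show ?case
    using is_diffop_diff[OF is_diffop_smult is_diffop_xD[OF Suc.IH]] by simp
qed

lemma is_diffop_Kop: "j \<le> r \<Longrightarrow> is_diffop r (Kop n r j)"
  unfolding Kop_def using is_diffop_smult[OF is_diffop_poch_op[of "r - j" j]] by simp

lemma is_diffop_Ksum: "is_diffop r (Ksum n r p)"
  unfolding Ksum_def by (intro is_diffop_sum is_diffop_mult_left is_diffop_Kop) simp

lemma smult_sum_right: "smult c (sum f A) = (\<Sum>x\<in>A. smult c (f x))"
  by (induction A rule: infinite_finite_induct) (simp_all add: smult_add_right)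

lemma is_diffop_monom_expansion:
  assumes "is_diffop r L"
  shows "L q = (\<Sum>k\<le>degree q. smult (coeff q k) (L (monom 1 k)))"
proof -
  obtain a where a: "L = diffop_of r a"
    using assms unfolding is_diffop_def by blast
  have "L q = L (\<Sum>k\<le>degree q. smult (coeff q k) (monom 1 k))"
    by (simp add: smult_monom poly_as_sum_of_monoms)
  also have "\<dots> = (\<Sum>k\<le>degree q. smult (coeff q k) (L (monom 1 k)))"
    unfolding a diffop_of_def
    by (simp add: higher_pderiv_sum higher_pderiv_smult sum_distrib_left smult_sum_right)
       (rule sum.swap)
  finally show ?thesis .
qed

lemma diffop_of_monom:
  "diffop_of r a (monom 1 k) = (\<Sum>i\<le>r. a i * monom (falling_fact i k) (k - i))"
  unfolding diffop_of_def by (simp add: higher_pderiv_monom_falling_fact)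

lemma Ksum_monom: "Ksum n r p (monom 1 k) = (\<Sum>j\<le>r. p j * monom (Kcoeff n r j k) (k - j))"
  unfolding Ksum_def by (simp add: Kop_monom)

lemma triangular_monom_sum_eq_0:
  fixes p :: "nat \<Rightarrow> 'a::idom poly"
  assumes triangular: "\<And>j k. k < j \<Longrightarrow> c j k = 0"
    and diag: "\<And>k. k \<le> r \<Longrightarrow> c k k \<noteq> 0"
    and sum_eq_0: "\<And>k. k \<le> r \<Longrightarrow> (\<Sum>j\<le>r. p j * monom (c j k) (k - j)) = 0"
    and "k \<le> r"
  shows "p k = 0"
  using \<open>k \<le> r\<close>
proof (induction k rule: less_induct)
  case (less k)
  have "(\<Sum>j\<in>{..r} - {k}. p j * monom (c j k) (k - j)) = 0"
  proof (intro sum.neutral ballI)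
    fix j assume "j \<in> {..r} - {k}"
    then consider "j < k" | "k < j"
      by fastforce
    then show "p j * monom (c j k) (k - j) = 0"
      by cases (use less triangular in auto)
  qed
  moreover have "(\<Sum>j\<le>r. p j * monom (c j k) (k - j))
      = p k * monom (c k k) 0 + (\<Sum>j\<in>{..r} - {k}. p j * monom (c j k) (k - j))"
    using less.prems by (simp add: sum.remove)
  ultimately have "smult (c k k) (p k) = 0"
    using sum_eq_0[OF less.prems] by (simp add: monom_0)
  then show ?case
    using diag[OF less.prems] by simp
qed

lemma diffop_eqI:
  assumes "is_diffop r L" "is_diffop r M" "\<And>k. k \<le> r \<Longrightarrow> L (monom 1 k) = M (monom 1 k)"
  shows "L = M"
proof -
  obtain a b where a: "L = diffop_of r a" and b: "M = diffop_of r b"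
    using assms(1,2) unfolding is_diffop_def by blast
  have diff: "diffop_of r a q - diffop_of r b q = diffop_of r (\<lambda>i. a i - b i) q" for q
    unfolding diffop_of_def by (simp add: sum_subtractf algebra_simps)
  have "a i - b i = 0" if "i \<le> r" for i
  proof (rule triangular_monom_sum_eq_0[where c = falling_fact and r = r])
    show "(\<Sum>j\<le>r. (a j - b j) * monom (falling_fact j k) (k - j)) = 0" if "k \<le> r" for k
      using assms(3)[OF that] diff[of "monom 1 k"] by (simp add: a b diffop_of_monom)
  qed (simp_all add: falling_fact_eq_0 falling_fact_nonzero that)
  then show ?thesis
    unfolding a b diffop_of_def by simp
qed

lemma Ksum_diff: "Ksum n r (\<lambda>j. p j - p' j) q = Ksum n r p q - Ksum n r p' q"
  unfolding Ksum_def by (simp add: sum_subtractf algebra_simps)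

lemma Ksum_add_single:
  "s \<le> r \<Longrightarrow> Ksum n r (\<lambda>j. p j + (if j = s then v else 0)) q = Ksum n r p q + v * Kop n r s q"
  unfolding Ksum_def by (simp add: sum.distrib distrib_right if_distrib[of "\<lambda>x. x * _"] cong: if_cong)

lemma Ksum_coeffs_unique:
  assumes "r \<le> n" "Ksum n r p = Ksum n r p'" "j \<le> r"
  shows "p j = p' j"
proof -
  have "p j - p' j = 0"
  proof (rule triangular_monom_sum_eq_0[where c = "Kcoeff n r" and r = r])
    show "(\<Sum>j\<le>r. (p j - p' j) * monom (Kcoeff n r j k) (k - j)) = 0" for k
      using Ksum_diff[of n r p p' "monom 1 k"] assms(2) by (simp add: Ksum_monom)
    show "Kcoeff n r k k \<noteq> 0" if "k \<le> r" for k
      using that assms(1) by (intro Kcoeff_nonzero) auto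
  qed (simp_all add: Kcoeff_eq_0_below assms(3))
  then show ?thesis
    by simp
qed

lemma Ksum_interpolates_monoms:
  assumes "r \<le> n" "s \<le> Suc r"
  shows "\<exists>p. (\<forall>j\<ge>s. p j = 0) \<and> (\<forall>k<s. Ksum n r p (monom 1 k) = L (monom 1 k))"
  using assms(2)
proof (induction s)
  case 0
  show ?case
    by (intro exI[of _ "\<lambda>j. 0"]) simp
next
  case (Suc s)
  then obtain p where p_0: "\<forall>j\<ge>s. p j = 0"
    and p_interp: "\<forall>k<s. Ksum n r p (monom 1 k) = L (monom 1 k)"
    by auto
  have "s \<le> r"
    using Suc.prems by simp
  then have diag: "Kcoeff n r s s \<noteq> 0"
    using assms(1) by (intro Kcoeff_nonzero) auto
  define v where "v = smult (1 / Kcoeff n r s s) (L (monom 1 s) - Ksum n r p (monom 1 s))"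
  define p' where "p' = (\<lambda>j. p j + (if j = s then v else 0))"
  have Ksum_p': "Ksum n r p' q = Ksum n r p q + v * Kop n r s q" for q
    unfolding p'_def using \<open>s \<le> r\<close> by (rule Ksum_add_single)
  show ?case
  proof (intro exI[of _ p'] conjI allI impI)
    fix j assume "Suc s \<le> j"
    then show "p' j = 0"
      using p_0 by (simp add: p'_def)
  next
    fix k assume "k < Suc s"
    then consider "k < s" | "k = s"
      by linarith
    then show "Ksum n r p' (monom 1 k) = L (monom 1 k)"
    proof cases
      case 1
      then show ?thesis
        using p_interp by (simp add: Ksum_p' Kop_monom Kcoeff_eq_0_below)
    next
      case 2
      then show ?thesis
        using diag by (simp add: Ksum_p' Kop_monom monom_0 v_def)
    qed
  qed
qed

lemma is_diffop_Ksum_expansion: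
  assumes "r \<le> n" "is_diffop r L"
  obtains p where "\<forall>j>r. p j = 0" "L = Ksum n r p"
proof -
  obtain p where "\<forall>j\<ge>Suc r. p j = 0" and interp: "\<forall>k<Suc r. Ksum n r p (monom 1 k) = L (monom 1 k)"
    using Ksum_interpolates_monoms[OF assms(1) order_refl] by blast
  moreover have "L = Ksum n r p"
    using interp by (intro diffop_eqI[OF assms(2) is_diffop_Ksum]) auto
  ultimately show ?thesis
    using that by (simp add: Suc_le_eq)
qed

lemma degree_Kop_le:
  assumes "degree q \<le> n" "j \<le> r" "r \<le> n"
  shows "degree (Kop n r j q) \<le> n - r"
proof -
  have "Kop n r j q = (\<Sum>k\<le>degree q. smult (coeff q k) (monom (Kcoeff n r j k) (k - j)))"
    using is_diffop_monom_expansion[OF is_diffop_Kop[OF assms(2)]] by (simp add: Kop_monom)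
  also have "degree \<dots> \<le> n - r"
  proof (intro degree_sum_le)
    fix k assume "k \<in> {..degree q}"
    then have "k \<le> n"
      using assms(1) by simp
    show "degree (smult (coeff q k) (monom (Kcoeff n r j k) (k - j))) \<le> n - r"
    proof (cases "j \<le> k \<and> k \<le> n - r + j")
      case True
      then show ?thesis
        by (meson degree_monom_le degree_smult_le le_diff_conv order_trans diff_le_mono)
    next
      case False
      then have "Kcoeff n r j k = 0"
        using \<open>k \<le> n\<close> Kcoeff_eq_0_below Kcoeff_eq_0_above by (meson not_le)
      then show ?thesis
        by simp
    qed
  qed simp
  finally show ?thesis .
qed

lemma Ksum_in_Lspace:
  assumes "m \<le> r" "r \<le> n" "\<forall>j\<le>r. p j \<in> Pspace (r - m)"
  shows "Ksum n r p \<in> Lspace n r m"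
proof -
  have "degree (Ksum n r p q) \<le> n - m" if "degree q \<le> n" for q
    unfolding Ksum_def
  proof (intro degree_sum_le)
    fix j assume "j \<in> {..r}"
    then have "degree (p j) + degree (Kop n r j q) \<le> (r - m) + (n - r)"
      using assms that by (intro add_mono degree_Kop_le) (auto simp: Pspace_def)
    then show "degree (p j * Kop n r j q) \<le> n - m"
      using degree_mult_le[of "p j" "Kop n r j q"] assms(1,2) by linarith
  qed simp
  then show ?thesis
    using is_diffop_Ksum unfolding Lspace_def Pspace_def is_diffop_def by blast
qed

lemma degree_Ksum_coeff_le:
  assumes "m \<le> r" "r \<le> n" "\<forall>q\<in>Pspace n. Ksum n r p q \<in> Pspace (n - m)" "j \<le> r"
  shows "degree (p j) \<le> r - m"
  using assms(4)
proof (induction "r - j" arbitrary: j rule: less_induct)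
  case less
  define k where "k = n - r + j"
  have "k \<le> n" "j \<le> k"
    using less.prems assms(2) by (auto simp: k_def)
  define R where "R = (\<Sum>i\<in>{..r} - {j}. p i * monom (Kcoeff n r i k) (k - i))"
  have split: "Ksum n r p (monom 1 k) = p j * monom (Kcoeff n r j k) (n - r) + R"
    unfolding Ksum_monom R_def using less.prems by (simp add: sum.remove k_def)
  have "degree (p i * monom (Kcoeff n r i k) (k - i)) \<le> n - m" if "i \<in> {..r} - {j}" for i
  proof (cases "i < j")
    case True
    then have "Kcoeff n r i k = 0"
      using \<open>k \<le> n\<close> by (intro Kcoeff_eq_0_above) (auto simp: k_def)
    then show ?thesis
      by simp
  next
    case False
    then have "degree (p i) \<le> r - m"
      using that less by auto
    then have "degree (p i) + degree (monom (Kcoeff n r i k) (k - i)) \<le> (r - m) + (k - i)"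
      using degree_monom_le by (intro add_mono) auto
    also have "\<dots> \<le> n - m"
      using False that assms(1,2) by (auto simp: k_def)
    finally show ?thesis
      using degree_mult_le order_trans by blast
  qed
  then have "degree R \<le> n - m"
    unfolding R_def by (intro degree_sum_le) auto
  moreover have "degree (Ksum n r p (monom 1 k)) \<le> n - m"
    using assms(3) \<open>k \<le> n\<close> degree_monom_le order_trans unfolding Pspace_def by blast
  ultimately have "degree (p j * monom (Kcoeff n r j k) (n - r)) \<le> n - m"
    using degree_diff_le[of "Ksum n r p (monom 1 k)" "n - m" R] by (simp add: split)
  moreover have "Kcoeff n r j k \<noteq> 0"
    using \<open>j \<le> k\<close> less.prems assms(2) by (intro Kcoeff_nonzero) (auto simp: k_def)
  ultimately show ?case
    using assms(1,2) by (cases "p j = 0") (auto simp: degree_mult_eq degree_monom_eq)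
qed

lemma Lspace_unique_Ksum:
  assumes "m \<le> r" "r \<le> n" "L \<in> Lspace n r m"
  shows "\<exists>!p. (\<forall>j\<le>r. p j \<in> Pspace (r - m)) \<and> (\<forall>j>r. p j = 0) \<and> L = Ksum n r p"
proof -
  have "is_diffop r L"
    using assms(3) unfolding Lspace_def is_diffop_def by blast
  then obtain p where p_0: "\<forall>j>r. p j = 0" and L: "L = Ksum n r p"
    using is_diffop_Ksum_expansion assms(2) by blast
  then have "\<forall>j\<le>r. p j \<in> Pspace (r - m)"
    using degree_Ksum_coeff_le[OF assms(1,2)] assms(3) unfolding Lspace_def Pspace_def by blast
  moreover have "p' = p" if "\<forall>j>r. p' j = 0" "L = Ksum n r p'" for p'
  proof
    fix j
    show "p' j = p j"
      using that p_0 L Ksum_coeffs_unique[OF assms(2), of p' p j] by (cases "j \<le> r") auto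
  qed
  ultimately show ?thesis
    using p_0 L by blast
qed

interpretation op_space: vector_space op_scale
  by unfold_locales (auto simp: op_scale_def smult_add_right smult_add_left)

definition Kbasis :: "nat \<Rightarrow> nat \<Rightarrow> nat \<times> nat \<Rightarrow> diffop" where
  "Kbasis n r = (\<lambda>(i, j) q. monom 1 i * Kop n r j q)"

lemma Kbasis_eq_Ksum:
  "j \<le> r \<Longrightarrow> Kbasis n r (i, j) = Ksum n r (\<lambda>j'. if j' = j then monom 1 i else 0)"
  unfolding Kbasis_def Ksum_def by (simp add: fun_eq_iff if_distrib[of "\<lambda>x. x * _"] cong: if_cong)

lemma sum_fun_apply: "(\<Sum>x\<in>A. f x) z = (\<Sum>x\<in>A. f x z)"
  by (induction A rule: infinite_finite_induct) (auto simp: plus_fun_def)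

lemma sum_Kbasis_eq_Ksum:
  "(\<Sum>(i, j)\<in>{..s} \<times> {..r}. op_scale (w (i, j)) (Kbasis n r (i, j)))
     = Ksum n r (\<lambda>j. \<Sum>i\<le>s. monom (w (i, j)) i)"
proof
  fix q
  have "(\<Sum>(i, j)\<in>{..s} \<times> {..r}. op_scale (w (i, j)) (Kbasis n r (i, j))) q
      = (\<Sum>i\<le>s. \<Sum>j\<le>r. monom (w (i, j)) i * Kop n r j q)"
    by (simp add: sum_fun_apply sum.cartesian_product op_scale_def Kbasis_def smult_monom_mult case_prod_unfold)
  also have "\<dots> = Ksum n r (\<lambda>j. \<Sum>i\<le>s. monom (w (i, j)) i) q"
    unfolding Ksum_def by (subst sum.swap) (simp add: sum_distrib_right)
  finally show "(\<Sum>(i, j)\<in>{..s} \<times> {..r}. op_scale (w (i, j)) (Kbasis n r (i, j))) q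
      = Ksum n r (\<lambda>j. \<Sum>i\<le>s. monom (w (i, j)) i) q" .
qed

lemma inj_on_Kbasis: "r \<le> n \<Longrightarrow> inj_on (Kbasis n r) ({..s} \<times> {..r})"
proof (intro inj_onI, clarsimp)
  fix i j i' j' assume "r \<le> n" "j \<le> r" "j' \<le> r" "Kbasis n r (i, j) = Kbasis n r (i', j')"
  then have "(if j = j then monom 1 i else 0) = (if j = j' then monom 1 i' else (0::real poly))"
    by (intro Ksum_coeffs_unique[of r n]) (simp_all add: Kbasis_eq_Ksum)
  then show "i = i' \<and> j = j'"
    by (auto split: if_splits simp: monom_eq_iff')
qed

lemma Ksum_eq_sum_Kbasis:
  assumes "\<forall>j\<le>r. degree (p j) \<le> s"
  shows "Ksum n r p = (\<Sum>x\<in>{..s} \<times> {..r}. op_scale (coeff (p (snd x)) (fst x)) (Kbasis n r x))"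
proof -
  have "Ksum n r p = Ksum n r (\<lambda>j. \<Sum>i\<le>s. monom (coeff (p j) i) i)"
    unfolding Ksum_def using assms by (intro ext sum.cong refl) (simp add: poly_as_sum_of_monoms')
  then show ?thesis
    using sum_Kbasis_eq_Ksum[where w = "\<lambda>(i, j). coeff (p j) i" and s = s]
    by (simp add: case_prod_unfold)
qed

lemma Kbasis_independent:
  assumes "r \<le> n"
  shows "\<not> op_space.dependent (Kbasis n r ` ({..s} \<times> {..r}))"
proof
  define I where "I = {..s} \<times> {..r}"
  assume "op_space.dependent (Kbasis n r ` ({..s} \<times> {..r}))"
  then obtain u v where u: "(\<Sum>v\<in>Kbasis n r ` I. op_scale (u v) v) = 0"
    and "v \<in> Kbasis n r ` I" "u v \<noteq> 0"
    using op_space.dependent_finite[of "Kbasis n r ` I"] unfolding I_def by auto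
  then obtain i j where ij: "i \<le> s" "j \<le> r" and v: "v = Kbasis n r (i, j)"
    unfolding I_def by auto
  define P where "P = (\<lambda>j. \<Sum>i\<le>s. monom (u (Kbasis n r (i, j))) i)"
  have "Ksum n r P = (\<Sum>x\<in>I. op_scale (u (Kbasis n r x)) (Kbasis n r x))"
    unfolding P_def I_def using sum_Kbasis_eq_Ksum[where w = "u \<circ> Kbasis n r" and s = s]
    by (simp add: case_prod_unfold)
  also have "\<dots> = 0"
    using u inj_on_Kbasis[OF assms] unfolding I_def by (simp add: sum.reindex)
  also have "\<dots> = Ksum n r (\<lambda>j. 0)"
    by (simp add: Ksum_def fun_eq_iff)
  finally have "P j = 0"
    using Ksum_coeffs_unique[OF assms _ ij(2)] by blast
  moreover have "coeff (P j) i = u v"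
    unfolding P_def v using ij(1) by (simp add: coeff_sum coeff_monom)
  ultimately show False
    using \<open>u v \<noteq> 0\<close> by simp
qed

lemma dim_Lspace:
  assumes "m \<le> r" "r \<le> n"
  shows "op_space.dim (Lspace n r m) = (r + 1) * (r - m + 1)"
proof (rule op_space.dim_unique)
  let ?I = "{..r - m} \<times> {..r}"
  show "Kbasis n r ` ?I \<subseteq> Lspace n r m"
    using assms
    by (auto simp: Kbasis_eq_Ksum Pspace_def intro!: Ksum_in_Lspace order_trans[OF degree_monom_le])
  show "Lspace n r m \<subseteq> op_space.span (Kbasis n r ` ?I)"
  proof
    fix L assume "L \<in> Lspace n r m"
    then obtain p where "\<forall>j\<le>r. degree (p j) \<le> r - m" "L = Ksum n r p"
      using Lspace_unique_Ksum[OF assms] unfolding Pspace_def by blast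
    then have "L = (\<Sum>x\<in>?I. op_scale (coeff (p (snd x)) (fst x)) (Kbasis n r x))"
      by (simp add: Ksum_eq_sum_Kbasis)
    also have "\<dots> \<in> op_space.span (Kbasis n r ` ?I)"
      by (intro op_space.span_sum op_space.span_scale op_space.span_base imageI)
    finally show "L \<in> op_space.span (Kbasis n r ` ?I)" .
  qed
  show "\<not> op_space.dependent (Kbasis n r ` ?I)"
    using assms(2) by (rule Kbasis_independent)
  show "card (Kbasis n r ` ?I) = (r + 1) * (r - m + 1)"
    using inj_on_Kbasis[OF assms(2)] by (simp add: card_image card_cartesian_product)
qed

theorem mainTheorem18:
  fixes n r m :: nat
  assumes "m \<le> r" and "r \<le> n"
  shows "(\<forall>L \<in> Lspace n r m. \<exists>!p. (\<forall>j\<le>r. p j \<in> Pspace (r - m)) \<and> (\<forall>j>r. p j = 0)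
                                      \<and> L = Ksum n r p)
       \<and> (\<forall>p. (\<forall>j\<le>r. p j \<in> Pspace (r - m)) \<longrightarrow> Ksum n r p \<in> Lspace n r m)
       \<and> vector_space.dim op_scale (Lspace n r m) = (r + 1) * (r - m + 1)
       \<and> vector_space.dim op_scale (Lspace n r 0) = (r + 1) ^ 2"
  using Lspace_unique_Ksum[OF assms] Ksum_in_Lspace[OF assms] dim_Lspace[OF assms]
    dim_Lspace[of 0 r n] assms(2)
  by (simp add: power2_eq_square)

end
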